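(* Let $G$ be a finite simple graph with $\alpha:=\alpha(G)\ge 2$. Let $C$ be a vertex cover of $G$ such that $S:=V(G)\setminus C$ satisfies $1\le |S|\le \alpha-1$. Let $H:=G(C)$ be the $C$-suspension of $G$. Then $G$ is pseudo-Gorenstein$^{*}$ if and only if $H$ is pseudo-Gorenstein$^{*}$.
   Context: A vertex cover of $G$ is a set $C\subseteq V(G)$ meeting every edge. For $\varnothing\ne C\subseteq V(G)$, the $C$-suspension $G(C)$ is the graph obtained from $G$ by adding a new vertex $z$ adjacent exactly to the vertices of $C$. For a finite simple graph $G$ on vertex set $[N]$, let $R=K[x_1,\dots,x_N]$ ($K$ a field) and $I(G)$ the edge ideal generated by $x_ix_j$, $\{i,j\}\in E(G)$. Let $\alpha(G)$ be the independence number (equal to $\dim R/I(G)$). Write the Hilbert series of $R/I(G)$ uniquely as $(h_0+\dots+h_st^s)/(1-t)^{\alpha(G)}$ with $h_s\ne 0$, and $\mathfrak a(G)=s-\alpha(G)$. $G$ is pseudo-Gorenstein$^{*}$ if $h_s=1$ and $\mathfrak a(G)=0$. *)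

theory Defs
  imports "HOL-Library.Multiset" "HOL-Computational_Algebra.Formal_Power_Series"
begin

definition simple_graph :: "'a set \<Rightarrow> 'a set set \<Rightarrow> bool" where
  "simple_graph V E \<longleftrightarrow> finite V \<and> (\<forall>e\<in>E. e \<subseteq> V \<and> card e = 2)"

definition indep :: "'a set set \<Rightarrow> 'a set \<Rightarrow> bool" where
  "indep E A \<longleftrightarrow> (\<forall>e\<in>E. \<not> e \<subseteq> A)"

definition indep_num :: "'a set \<Rightarrow> 'a set set \<Rightarrow> nat" where
  "indep_num V E = Max (card ` {A. A \<subseteq> V \<and> indep E A})"

definition vertex_cover :: "'a set \<Rightarrow> 'a set set \<Rightarrow> 'a set \<Rightarrow> bool" where
  "vertex_cover V E C \<longleftrightarrow> C \<subseteq> V \<and> (\<forall>e\<in>E. e \<inter> C \<noteq> {})"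

text \<open>Edges of the C-suspension G(C) with new vertex z (vertex set insert z V).\<close>
definition suspension_edges :: "'a set set \<Rightarrow> 'a set \<Rightarrow> 'a \<Rightarrow> 'a set set" where
  "suspension_edges E C z = E \<union> {{z, c} | c. c \<in> C}"

text \<open>Hilbert function of R/I(G): dim_K of the degree-d part, which has as K-basis the
  monomials of degree d (multisets of vertices) not in I(G), i.e. whose support is independent.\<close>
definition hilbert_fun :: "'a set \<Rightarrow> 'a set set \<Rightarrow> nat \<Rightarrow> nat" where
  "hilbert_fun V E d = card {m. set_mset m \<subseteq> V \<and> indep E (set_mset m) \<and> size m = d}"

definition hilbert_series :: "'a set \<Rightarrow> 'a set set \<Rightarrow> int fps" where
  "hilbert_series V E = Abs_fps (\<lambda>d. int (hilbert_fun V E d))"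

definition h_fps :: "'a set \<Rightarrow> 'a set set \<Rightarrow> int fps" where
  "h_fps V E = hilbert_series V E * (1 - fps_X) ^ indep_num V E"

definition h_deg :: "'a set \<Rightarrow> 'a set set \<Rightarrow> nat" where
  "h_deg V E = Max {i. fps_nth (h_fps V E) i \<noteq> 0}"

definition a_inv :: "'a set \<Rightarrow> 'a set set \<Rightarrow> int" where
  "a_inv V E = int (h_deg V E) - int (indep_num V E)"

definition pseudo_gorenstein_star :: "'a set \<Rightarrow> 'a set set \<Rightarrow> bool" where
  "pseudo_gorenstein_star V E \<longleftrightarrow> fps_nth (h_fps V E) (h_deg V E) = 1 \<and> a_inv V E = 0"

end

theory Submission
  imports Defs
begin

(*
  Splitting the monomials outside I(G) by their support gives
  h(t) = \<Sum>_A t^|A| (1 - t)^(\<alpha> - |A|), summed over the independent sets A of G.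
  Hence h vanishes above degree \<alpha>, and G is pseudo-Gorenstein* iff
  h_\<alpha> = \<Sum>_A (-1)^(\<alpha> - |A|) equals 1.
  The independent sets of G(C) are those of G together with the sets {z} \<union> B, B \<subseteq> S.
  As |S| < \<alpha>, the suspension has the same independence number, and the new sets contribute
  \<Sum>_(B \<subseteq> S) (-1)^(\<alpha> - 1 - |B|) = 0 to h_\<alpha> because S is nonempty.
*)

unbundle fps_syntax

lemma fps_one_minus_X_power_nth:
  "((1 - fps_X) ^ m :: 'a :: comm_ring_1 fps) $ j = (-1) ^ j * of_nat (m choose j)"
proof (induction m arbitrary: j)
  case 0
  then show ?case by (cases j) auto
next
  case (Suc m)
  have "((1 - fps_X) ^ Suc m :: 'a fps) = (1 - fps_X) ^ m - fps_X * (1 - fps_X) ^ m"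
    by (simp add: algebra_simps)
  then show ?case
    by (cases j) (simp_all add: Suc.IH fps_X_mult_nth algebra_simps)
qed

lemma fps_X_power_mult_one_minus_X_power_nth:
  "(fps_X ^ k * (1 - fps_X) ^ m :: 'a :: comm_ring_1 fps) $ i =
     (if i < k then 0 else (-1) ^ (i - k) * of_nat (m choose (i - k)))"
  by (simp add: fps_X_power_mult_nth fps_one_minus_X_power_nth)

lemma sum_Pow_neg_one_power_card:
  assumes "finite S" "S \<noteq> {}"
  shows "(\<Sum>B\<in>Pow S. (-1) ^ card B :: 'a :: comm_ring_1) = 0"
  using prod_diff_conv_sum[OF \<open>finite S\<close>, of "\<lambda>_. 1 :: 'a" "\<lambda>_. 1"] assms
  by (simp add: power_0_left card_eq_0_iff)

lemma sum_Pow_neg_one_power_diff_card: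
  assumes "finite S" "S \<noteq> {}" "card S \<le> n"
  shows "(\<Sum>B\<in>Pow S. (-1) ^ (n - card B) :: 'a :: comm_ring_1) = 0"
proof -
  have "(\<Sum>B\<in>Pow S. (-1) ^ (n - card B) :: 'a) = (\<Sum>B\<in>Pow S. (-1) ^ n * (-1) ^ card B)"
  proof (rule sum.cong)
    fix B assume "B \<in> Pow S"
    then have "card B \<le> n"
      using assms by (meson PowD card_mono order_trans)
    then show "(-1 :: 'a) ^ (n - card B) = (-1) ^ n * (-1) ^ card B"
      by (simp add: minus_one_power_iff)
  qed simp
  also have "\<dots> = 0"
    using sum_Pow_neg_one_power_card[OF assms(1,2), where 'a = 'a] by (simp flip: sum_distrib_left)
  finally show ?thesis .
qed

lemma fps_ones_mult_one_minus_X: "Abs_fps (\<lambda>_. 1 :: 'a :: comm_ring_1) * (1 - fps_X) = 1"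
  by (rule fps_ext) (simp add: algebra_simps fps_X_mult_right_nth)

lemma fps_multisets_of_size_mult_one_minus_X_power:
  assumes "finite A"
  shows "Abs_fps (\<lambda>n. of_nat (card (multisets_of_size A n))) * (1 - fps_X) ^ card A =
         (1 :: 'a :: comm_ring_1 fps)"
proof -
  have "(Abs_fps (\<lambda>_. 1 :: 'a) ^ card A) $ n = of_nat (card (multisets_of_size A n))" for n
    using fps_prod_nth'[OF assms, of "\<lambda>_. Abs_fps (\<lambda>_. 1 :: 'a)" n] by simp
  then have "Abs_fps (\<lambda>n. of_nat (card (multisets_of_size A n))) = Abs_fps (\<lambda>_. 1 :: 'a) ^ card A"
    by (simp add: fps_eq_iff)
  then show ?thesis
    by (simp add: fps_ones_mult_one_minus_X flip: power_mult_distrib)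
qed

lemma card_multisets_with_support:
  assumes "finite A"
  shows "card {m. set_mset m = A \<and> size m = d} =
         (if card A \<le> d then card (multisets_of_size A (d - card A)) else 0)"
proof (cases "card A \<le> d")
  case True
  have "bij_betw (\<lambda>m. m + mset_set A) (multisets_of_size A (d - card A))
          {m. set_mset m = A \<and> size m = d}"
  proof (rule bij_betw_byWitness[where f' = "\<lambda>m. m - mset_set A"])
    show "\<forall>m\<in>{m. set_mset m = A \<and> size m = d}. m - mset_set A + mset_set A = m"
      using mset_set_set_mset_msubset subset_mset.diff_add by blast
    show "(\<lambda>m. m + mset_set A) ` multisets_of_size A (d - card A) \<subseteq> {m. set_mset m = A \<and> size m = d}"
      using True assms by (auto simp: multisets_of_size_def)
    show "(\<lambda>m. m - mset_set A) ` {m. set_mset m = A \<and> size m = d} \<subseteq> multisets_of_size A (d - card A)"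
    proof (rule image_subsetI)
      fix m assume m: "m \<in> {m. set_mset m = A \<and> size m = d}"
      then have "size (m - mset_set A) = d - card A"
        using mset_set_set_mset_msubset[of m] by (simp add: size_Diff_submset)
      then show "m - mset_set A \<in> multisets_of_size A (d - card A)"
        using m by (auto simp: multisets_of_size_def dest: in_diffD)
    qed
  qed simp
  then show ?thesis
    using True by (simp add: bij_betw_same_card)
next
  case False
  have "card A \<le> size m" if "set_mset m = A" for m :: "'a multiset"
    by (metis that mset_set_set_mset_msubset size_mset_mono size_mset_set)
  then have "{m. set_mset m = A \<and> size m = d} = {}"
    using False assms by fastforce
  then show ?thesis
    using False by (simp only: card.empty if_False)
qed

definition support_series :: "'a set \<Rightarrow> int fps" where
  "support_series A = Abs_fps (\<lambda>d. int (card {m. set_mset m = A \<and> size m = d}))"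

lemma support_series_mult_one_minus_X_power:
  assumes "finite A"
  shows "support_series A * (1 - fps_X) ^ card A = fps_X ^ card A"
proof -
  have "support_series A = fps_X ^ card A * Abs_fps (\<lambda>n. int (card (multisets_of_size A n)))"
    by (rule fps_ext)
      (auto simp: support_series_def card_multisets_with_support[OF assms] fps_X_power_mult_nth)
  then show ?thesis
    using fps_multisets_of_size_mult_one_minus_X_power[OF assms] by (simp add: mult.assoc)
qed

definition indep_sets :: "'a set \<Rightarrow> 'a set set \<Rightarrow> 'a set set" where
  "indep_sets V E = {A. A \<subseteq> V \<and> indep E A}"

lemma finite_indep_sets: "finite V \<Longrightarrow> finite (indep_sets V E)"
  by (simp add: indep_sets_def)

lemma card_le_indep_num:
  "finite V \<Longrightarrow> A \<in> indep_sets V E \<Longrightarrow> card A \<le> indep_num V E"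
  unfolding indep_num_def indep_sets_def by (intro Max_ge) auto

lemma hilbert_series_eq_sum_support_series:
  assumes "finite V"
  shows "hilbert_series V E = (\<Sum>A\<in>indep_sets V E. support_series A)"
proof (rule fps_ext)
  fix d
  have "{m. set_mset m \<subseteq> V \<and> indep E (set_mset m) \<and> size m = d} =
        (\<Union>A\<in>indep_sets V E. {m. set_mset m = A \<and> size m = d})"
    by (auto simp: indep_sets_def)
  moreover have "finite {m. set_mset m = A \<and> size m = d}" if "A \<in> indep_sets V E" for A
  proof (rule finite_subset)
    show "finite (multisets_of_size A d)"
      using that assms by (auto simp: indep_sets_def intro: finite_subset)
  qed (auto simp: multisets_of_size_def)
  ultimately have "hilbert_fun V E d =
      (\<Sum>A\<in>indep_sets V E. card {m. set_mset m = A \<and> size m = d})"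
    unfolding hilbert_fun_def
    by (auto intro!: card_UN_disjoint simp: finite_indep_sets[OF assms])
  then show "hilbert_series V E $ d = (\<Sum>A\<in>indep_sets V E. support_series A) $ d"
    by (simp add: hilbert_series_def support_series_def fps_sum_nth)
qed

lemma h_fps_eq_sum_indep_sets:
  assumes "finite V"
  shows "h_fps V E =
    (\<Sum>A\<in>indep_sets V E. fps_X ^ card A * (1 - fps_X) ^ (indep_num V E - card A))"
  unfolding h_fps_def hilbert_series_eq_sum_support_series[OF assms] sum_distrib_right
proof (rule sum.cong)
  fix A assume A: "A \<in> indep_sets V E"
  then have "finite A"
    using assms by (auto simp: indep_sets_def intro: finite_subset)
  moreover have "indep_num V E = card A + (indep_num V E - card A)"
    using card_le_indep_num[OF assms A] by simp
  ultimately show "support_series A * (1 - fps_X) ^ indep_num V E =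
      fps_X ^ card A * (1 - fps_X) ^ (indep_num V E - card A)"
    by (metis power_add mult.assoc support_series_mult_one_minus_X_power)
qed simp

lemma h_fps_nth_gt_indep_num:
  assumes "finite V" "i > indep_num V E"
  shows "h_fps V E $ i = 0"
proof -
  have "(fps_X ^ card A * (1 - fps_X) ^ (indep_num V E - card A) :: int fps) $ i = 0"
    if "A \<in> indep_sets V E" for A
    using card_le_indep_num[OF assms(1) that] assms(2)
    by (simp add: fps_X_power_mult_one_minus_X_power_nth)
  then show ?thesis
    by (simp add: h_fps_eq_sum_indep_sets[OF assms(1)] fps_sum_nth)
qed

lemma h_fps_nth_indep_num:
  assumes "finite V"
  shows "h_fps V E $ indep_num V E = (\<Sum>A\<in>indep_sets V E. (-1) ^ (indep_num V E - card A))"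
  unfolding h_fps_eq_sum_indep_sets[OF assms] fps_sum_nth
proof (rule sum.cong)
  fix A assume A: "A \<in> indep_sets V E"
  show "(fps_X ^ card A * (1 - fps_X) ^ (indep_num V E - card A)) $ indep_num V E =
      (-1 :: int) ^ (indep_num V E - card A)"
    using card_le_indep_num[OF assms A] by (simp add: fps_X_power_mult_one_minus_X_power_nth)
qed simp

lemma pseudo_gorenstein_star_iff:
  assumes "finite V"
  shows "pseudo_gorenstein_star V E \<longleftrightarrow> h_fps V E $ indep_num V E = 1"
proof
  assume "h_fps V E $ indep_num V E = 1"
  moreover have "{i. h_fps V E $ i \<noteq> 0} \<subseteq> {..indep_num V E}"
    using h_fps_nth_gt_indep_num[OF assms] by (auto simp: not_le[symmetric])
  ultimately have "h_deg V E = indep_num V E"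
    unfolding h_deg_def by (intro Max_eqI) (auto intro: finite_subset)
  with \<open>h_fps V E $ indep_num V E = 1\<close> show "pseudo_gorenstein_star V E"
    by (simp add: pseudo_gorenstein_star_def a_inv_def)
qed (auto simp: pseudo_gorenstein_star_def a_inv_def)

lemma indep_sets_suspension:
  assumes "vertex_cover V E C" "z \<notin> V"
  shows "indep_sets (insert z V) (suspension_edges E C z) =
         indep_sets V E \<union> insert z ` Pow (V - C)"
proof (intro equalityI subsetI)
  fix A assume "A \<in> indep_sets (insert z V) (suspension_edges E C z)"
  then have A: "A \<subseteq> insert z V" "indep (suspension_edges E C z) A"
    by (auto simp: indep_sets_def)
  show "A \<in> indep_sets V E \<union> insert z ` Pow (V - C)"
  proof (cases "z \<in> A")
    case True
    have "c \<notin> A" if "c \<in> C" for c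
    proof -
      have "{z, c} \<in> suspension_edges E C z"
        using that by (auto simp: suspension_edges_def)
      then show ?thesis
        using A(2) True by (auto simp: indep_def)
    qed
    then have "A - {z} \<in> Pow (V - C)"
      using A(1) True by auto
    with True show ?thesis
      by (metis UnI2 image_eqI insert_Diff)
  next
    case False
    then show ?thesis
      using A by (auto simp: indep_sets_def indep_def suspension_edges_def)
  qed
next
  have CV: "C \<subseteq> V" and cover: "\<And>e. e \<in> E \<Longrightarrow> e \<inter> C \<noteq> {}"
    using assms(1) by (auto simp: vertex_cover_def)
  fix A assume "A \<in> indep_sets V E \<union> insert z ` Pow (V - C)"
  then consider "A \<in> indep_sets V E" | B where "B \<subseteq> V - C" "A = insert z B"
    by blast
  then show "A \<in> indep_sets (insert z V) (suspension_edges E C z)"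
  proof cases
    case 1
    then have "z \<notin> A"
      using assms(2) by (auto simp: indep_sets_def)
    with 1 show ?thesis
      by (auto simp: indep_sets_def indep_def suspension_edges_def)
  next
    case (2 B)
    have "\<not> e \<subseteq> A" if "e \<in> E" for e
      using cover[OF that] 2 CV assms(2) by blast
    moreover have "\<not> {z, c} \<subseteq> A" if "c \<in> C" for c
      using that 2 CV assms(2) by blast
    ultimately have "indep (suspension_edges E C z) A"
      unfolding indep_def suspension_edges_def by blast
    moreover have "A \<subseteq> insert z V"
      using 2 by blast
    ultimately show ?thesis
      by (simp add: indep_sets_def)
  qed
qed

lemma indep_num_suspension:
  assumes "finite V" "vertex_cover V E C" "z \<notin> V" "card (V - C) < indep_num V E"
  shows "indep_num (insert z V) (suspension_edges E C z) = indep_num V E"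
proof -
  have "card (insert z B) \<le> indep_num V E" if "B \<subseteq> V - C" for B
  proof -
    have "finite B" "z \<notin> B"
      using that assms(1,3) by (auto intro: finite_subset)
    moreover have "card B \<le> card (V - C)"
      using that assms(1) by (simp add: card_mono)
    ultimately show ?thesis
      using assms(4) by simp
  qed
  moreover have "indep_num V E \<in> card ` indep_sets V E"
    unfolding indep_num_def indep_sets_def[symmetric]
  proof (rule Max_in)
    have "{} \<in> indep_sets V E"
      using assms(2) by (auto simp: indep_sets_def indep_def vertex_cover_def)
    then show "card ` indep_sets V E \<noteq> {}"
      by blast
  qed (simp add: finite_indep_sets assms(1))
  ultimately have "Max (card ` (indep_sets V E \<union> insert z ` Pow (V - C))) = indep_num V E"
    using card_le_indep_num[OF assms(1)] finite_indep_sets[OF assms(1)] assms(1)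
    by (intro Max_eqI) auto
  then show ?thesis
    by (simp add: indep_num_def flip: indep_sets_def indep_sets_suspension[OF assms(2,3)])
qed

lemma h_fps_nth_indep_num_suspension:
  assumes "finite V" "vertex_cover V E C" "z \<notin> V" "V - C \<noteq> {}" "card (V - C) < indep_num V E"
  shows "h_fps (insert z V) (suspension_edges E C z) $ indep_num V E = h_fps V E $ indep_num V E"
proof -
  let ?\<alpha> = "indep_num V E" and ?S = "V - C"
  have disjoint: "indep_sets V E \<inter> insert z ` Pow ?S = {}"
    using assms(3) by (auto simp: indep_sets_def)
  have "inj_on (insert z) (Pow ?S)"
    using assms(3) by (auto simp: inj_on_def)
  then have "(\<Sum>A\<in>insert z ` Pow ?S. (-1) ^ (?\<alpha> - card A)) =
      (\<Sum>B\<in>Pow ?S. (-1) ^ (?\<alpha> - card (insert z B)) :: int)"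
    by (simp add: sum.reindex)
  also have "\<dots> = (\<Sum>B\<in>Pow ?S. (-1) ^ ((?\<alpha> - 1) - card B))"
    using assms(1,3) by (intro sum.cong) (auto simp: card_insert_if finite_subset)
  also have "\<dots> = 0"
    using assms(1,4,5) by (intro sum_Pow_neg_one_power_diff_card) auto
  finally have "(\<Sum>A\<in>insert z ` Pow ?S. (-1) ^ (?\<alpha> - card A)) = (0 :: int)" .
  moreover have "h_fps (insert z V) (suspension_edges E C z) $ ?\<alpha> =
      (\<Sum>A\<in>indep_sets V E \<union> insert z ` Pow ?S. (-1) ^ (?\<alpha> - card A))"
    using h_fps_nth_indep_num[of "insert z V" "suspension_edges E C z"] assms(1)
    by (simp add: indep_num_suspension[OF assms(1,2,3,5)] indep_sets_suspension[OF assms(2,3)])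
  ultimately show ?thesis
    using assms(1) disjoint
    by (simp add: h_fps_nth_indep_num sum.union_disjoint finite_indep_sets)
qed

theorem theorem5p3:
  fixes V :: "'a set" and E :: "'a set set" and C :: "'a set" and z :: 'a
  assumes "simple_graph V E"
    and "indep_num V E \<ge> 2"
    and "vertex_cover V E C"
    and "1 \<le> card (V - C)"
    and "card (V - C) \<le> indep_num V E - 1"
    and "z \<notin> V"
  shows "pseudo_gorenstein_star V E \<longleftrightarrow>
         pseudo_gorenstein_star (insert z V) (suspension_edges E C z)"
proof -
  \<comment> \<open>The hypothesis \<open>indep_num V E \<ge> 2\<close> is implied by the two bounds on \<open>card (V - C)\<close>.\<close>
  have "finite V"
    using assms(1) by (simp add: simple_graph_def)
  have "V - C \<noteq> {}"
    using assms(4) by (metis card.empty not_one_le_zero)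
  moreover have "card (V - C) < indep_num V E"
    using assms(4,5) by linarith
  ultimately show ?thesis
    using \<open>finite V\<close> assms(3,6)
    by (simp add: pseudo_gorenstein_star_iff indep_num_suspension h_fps_nth_indep_num_suspension)
qed

end
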